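(* Let $P=\{p_1,\ldots,p_n\}$ be $n$ points chosen uniformly and independently at random in $[0,1]^2$, and let $A$ be the area of the largest cell in the Voronoi diagram of $P$. Then for any constant $c>1$, $$\Pr\Bigl[A\ge 4c\,\frac{\log n}{n}\Bigr]\le \frac{1}{n^{2c-4}}.$$
   Context: All logarithms are natural. The unit square is considered with the torus topology: for $x,y\in[0,1]$ let $d_T(x,y)=\min(|x-y|,1-|x-y|)$, and for $p,q\in[0,1]^2$ let $d_T(p,q)=\sqrt{d_T(p_1,q_1)^2+d_T(p_2,q_2)^2}$. The Voronoi diagram of $P$ is computed with respect to this torus distance and restricted to $[0,1]^2$. *)

theory Defs
  imports "HOL-Probability.Probability"
begin

definition dT1 :: "real \<Rightarrow> real \<Rightarrow> real" where
  "dT1 x y = min \<bar>x - y\<bar> (1 - \<bar>x - y\<bar>)"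

definition dT :: "real \<times> real \<Rightarrow> real \<times> real \<Rightarrow> real" where
  "dT p q = sqrt ((dT1 (fst p) (fst q))\<^sup>2 + (dT1 (snd p) (snd q))\<^sup>2)"

definition unit_square :: "(real \<times> real) set" where
  "unit_square = {0..1} \<times> {0..1}"

definition voronoi_cell :: "nat \<Rightarrow> (nat \<Rightarrow> real \<times> real) \<Rightarrow> nat \<Rightarrow> (real \<times> real) set" where
  "voronoi_cell n P i = {x \<in> unit_square. \<forall>j<n. dT x (P i) \<le> dT x (P j)}"

definition largest_cell_area :: "nat \<Rightarrow> (nat \<Rightarrow> real \<times> real) \<Rightarrow> real" where
  "largest_cell_area n P = Max ((\<lambda>i. measure lborel (voronoi_cell n P i)) ` {..<n})"

definition random_points :: "nat \<Rightarrow> (nat \<Rightarrow> real \<times> real) measure" where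
  "random_points n = PiM {..<n} (\<lambda>_. uniform_measure lborel unit_square)"

end

theory Submission
  imports Defs
begin

text \<open>
  Write the threshold as \<open>a = 8 s\<^sup>2\<close>. A cell of area at least \<open>a\<close> does not fit into the
  torus square of half-width \<open>\<surd>2 s\<close> around its centre, so it contains a point \<open>x\<close> at
  torus distance about \<open>\<surd>2 s\<close> from every \<open>p\<^sub>j\<close>. Rounding \<open>x\<close> down to the grid
  \<open>(1/n)\<int>\<^sup>2\<close> yields one of \<open>(n+1)\<^sup>2\<close> fixed torus squares of half-width about \<open>s\<close>
  that contains none of the \<open>n\<close> points. Each of them is empty with probability
  \<open>(1 - 4 s\<^sup>2)\<^sup>n \<approx> exp (-4 s\<^sup>2 n) = n\<^bsup>-2c\<^esup>\<close>, and the union bound gives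
  \<open>(n+1)\<^sup>2 n\<^bsup>-2c\<^esup> \<le> n\<^bsup>4-2c\<^esup>\<close>.
\<close>

lemma dT1_commute: "dT1 x y = dT1 y x"
  unfolding dT1_def by (simp add: abs_minus_commute)

lemma dT1_le_abs: "dT1 x y \<le> \<bar>x - y\<bar>"
  unfolding dT1_def by simp

lemma dT1_nonneg: "x \<in> {0..1} \<Longrightarrow> y \<in> {0..1} \<Longrightarrow> 0 \<le> dT1 x y"
  unfolding dT1_def by auto

lemma dT1_triangle:
  assumes "x \<in> {0..1}" "y \<in> {0..1}" "z \<in> {0..1}"
  shows "dT1 x z \<le> dT1 x y + dT1 y z"
  using assms unfolding dT1_def min_def by (auto split: if_splits abs_split)

lemma dT_commute: "dT p q = dT q p"
  unfolding dT_def by (simp add: dT1_commute)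

lemma dT1_le_dT: "dT1 (fst p) (fst q) \<le> dT p q" "dT1 (snd p) (snd q) \<le> dT p q"
  unfolding dT_def by (auto intro!: order.trans[OF abs_ge_self real_le_rsqrt])

lemma dT_less_sqrt2_mult:
  assumes "p \<in> unit_square" "q \<in> unit_square"
    and "dT1 (fst p) (fst q) < e" "dT1 (snd p) (snd q) < e"
  shows "dT p q < sqrt 2 * e"
proof -
  have nonneg: "0 \<le> dT1 (fst p) (fst q)" "0 \<le> dT1 (snd p) (snd q)"
    using assms(1,2) by (auto intro!: dT1_nonneg simp: unit_square_def mem_Times_iff)
  then have "(dT1 (fst p) (fst q))\<^sup>2 < e\<^sup>2" "(dT1 (snd p) (snd q))\<^sup>2 < e\<^sup>2"
    using assms(3,4) by (auto intro!: power_strict_mono)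
  then have "dT p q < sqrt (2 * e\<^sup>2)"
    unfolding dT_def by (intro real_sqrt_less_mono) linarith
  also have "\<dots> = sqrt 2 * e"
    using nonneg assms(3) by (simp add: real_sqrt_mult)
  finally show ?thesis .
qed

lemma measure_mono_subset_fmeasurable:
  "A \<subseteq> B \<Longrightarrow> B \<in> fmeasurable M \<Longrightarrow> measure M A \<le> measure M B"
  by (cases "A \<in> sets M") (auto intro: measure_mono_fmeasurable simp: measure_notin_sets)

lemma measure_lborel_Times:
  fixes A B :: "real set"
  assumes "A \<in> sets borel" "B \<in> sets borel"
  shows "measure lborel (A \<times> B) = measure lborel A * measure lborel B"
proof -
  have "emeasure (lborel \<Otimes>\<^sub>M lborel) (A \<times> B) = emeasure lborel A * emeasure lborel B"
    using assms by (intro lborel.emeasure_pair_measure_Times) auto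
  then show ?thesis
    unfolding measure_def by (simp add: lborel_prod enn2real_mult)
qed

lemma unit_square_borel [measurable]: "unit_square \<in> sets borel"
  unfolding unit_square_def by (intro borel_Times) auto

lemma emeasure_unit_square: "emeasure lborel unit_square = 1"
proof -
  have "emeasure (lborel \<Otimes>\<^sub>M lborel) ({0..1::real} \<times> {0..1::real})
      = emeasure lborel {0..1::real} * emeasure lborel {0..1::real}"
    by (intro lborel.emeasure_pair_measure_Times) auto
  then show ?thesis by (simp add: lborel_prod unit_square_def)
qed

lemma measure_unit_square: "measure lborel unit_square = 1"
  by (simp add: measure_def emeasure_unit_square)

lemma unit_square_fmeasurable: "unit_square \<in> fmeasurable lborel"
  by (simp add: fmeasurable_def emeasure_unit_square)

lemma measure_le_1_if_subset_unit_square: "A \<subseteq> unit_square \<Longrightarrow> measure lborel A \<le> 1"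
  using measure_mono_subset_fmeasurable[OF _ unit_square_fmeasurable] measure_unit_square
  by metis

definition torus_interval :: "real \<Rightarrow> real \<Rightarrow> real set" where
  "torus_interval g w = {y \<in> {0..1}. dT1 y g < w}"

definition torus_square :: "real \<times> real \<Rightarrow> real \<Rightarrow> (real \<times> real) set" where
  "torus_square p w = torus_interval (fst p) w \<times> torus_interval (snd p) w"

lemma torus_interval_borel [measurable]: "torus_interval g w \<in> sets borel"
proof -
  have "continuous_on UNIV (\<lambda>y. dT1 y g)"
    unfolding dT1_def by (intro continuous_intros)
  then have "open {y. dT1 y g < w}"
    by (intro open_Collect_less) (auto intro: continuous_intros)
  moreover have "torus_interval g w = {0..1} \<inter> {y. dT1 y g < w}"
    unfolding torus_interval_def by auto
  ultimately show ?thesis by auto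
qed

lemma torus_square_borel [measurable]: "torus_square p w \<in> sets borel"
  unfolding torus_square_def by (intro borel_Times torus_interval_borel)

lemma torus_square_subset_unit_square: "torus_square p w \<subseteq> unit_square"
  unfolding torus_square_def torus_interval_def unit_square_def by auto

lemma measure_torus_interval:
  assumes "g \<in> {0..1}" "0 \<le> w" "w \<le> 1/2"
  shows "measure lborel (torus_interval g w) = 2 * w"
proof -
  consider "g < w" | "1 - w < g" | "w \<le> g" "g \<le> 1 - w" by linarith
  then show ?thesis
  proof cases
    case 1
    then have "torus_interval g w = {0..<g + w} \<union> {1 + g - w<..1}"
      using assms unfolding torus_interval_def dT1_def by (auto split: abs_split)
    moreover have "measure lborel ({0..<g + w} \<union> {1 + g - w<..1})
        = measure lborel {0..<g + w} + measure lborel {1 + g - w<..1}"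
      using assms 1 by (intro measure_Union) auto
    ultimately show ?thesis using assms 1 by simp
  next
    case 2
    then have "torus_interval g w = {0..<g + w - 1} \<union> {g - w<..1}"
      using assms unfolding torus_interval_def dT1_def by (auto split: abs_split)
    moreover have "measure lborel ({0..<g + w - 1} \<union> {g - w<..1})
        = measure lborel {0..<g + w - 1} + measure lborel {g - w<..1}"
      using assms 2 by (intro measure_Union) auto
    ultimately show ?thesis using assms 2 by simp
  next
    case 3
    then have "torus_interval g w = {g - w<..<g + w}"
      using assms unfolding torus_interval_def dT1_def by (auto split: abs_split)
    then show ?thesis using assms by simp
  qed
qed

lemma measure_torus_interval_le:
  assumes "g \<in> {0..1}" "0 \<le> w"
  shows "measure lborel (torus_interval g w) \<le> 2 * w"
proof (cases "w \<le> 1/2")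
  case False
  have "measure lborel (torus_interval g w) \<le> measure lborel {0..1::real}"
    by (intro measure_mono_subset_fmeasurable) (auto simp: torus_interval_def fmeasurable_def)
  with False show ?thesis by simp
qed (use assms measure_torus_interval in auto)

lemma measure_torus_square:
  assumes "p \<in> unit_square" "0 \<le> w" "w \<le> 1/2"
  shows "measure lborel (torus_square p w) = 4 * w\<^sup>2"
  using assms unfolding torus_square_def unit_square_def
  by (simp add: measure_lborel_Times measure_torus_interval mem_Times_iff power2_eq_square)

lemma measure_torus_square_le:
  assumes "p \<in> unit_square" "0 \<le> w"
  shows "measure lborel (torus_square p w) \<le> 4 * w\<^sup>2"
proof -
  have "fst p \<in> {0..1}" "snd p \<in> {0..1}"
    using assms(1) by (auto simp: unit_square_def mem_Times_iff)
  then have "measure lborel (torus_interval (fst p) w) * measure lborel (torus_interval (snd p) w)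
      \<le> (2 * w) * (2 * w)"
    using assms(2) by (intro mult_mono measure_torus_interval_le) auto
  then show ?thesis
    unfolding torus_square_def by (simp add: measure_lborel_Times power2_eq_square)
qed

lemma mem_torus_square_if_dT_less:
  "x \<in> unit_square \<Longrightarrow> dT x p < r \<Longrightarrow> x \<in> torus_square p r"
  using dT1_le_dT[of x p]
  by (auto simp: torus_square_def torus_interval_def unit_square_def mem_Times_iff)

lemma measure_le_if_dT_less:
  assumes "C \<subseteq> unit_square" "p \<in> unit_square" "0 \<le> r" "\<forall>x\<in>C. dT x p < r"
  shows "measure lborel C \<le> 4 * r\<^sup>2"
proof -
  have "C \<subseteq> torus_square p r"
    using assms(1,4) mem_torus_square_if_dT_less by blast
  moreover have "torus_square p r \<in> fmeasurable lborel"
    using torus_square_subset_unit_square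
    by (intro fmeasurableI2[OF unit_square_fmeasurable]) auto
  ultimately have "measure lborel C \<le> measure lborel (torus_square p r)"
    by (rule measure_mono_subset_fmeasurable)
  also have "\<dots> \<le> 4 * r\<^sup>2"
    using assms(2,3) by (rule measure_torus_square_le)
  finally show ?thesis .
qed

lemma largest_cell_area_le_1: "0 < n \<Longrightarrow> largest_cell_area n P \<le> 1"
  unfolding largest_cell_area_def
  by (subst Max_le_iff) (auto intro!: measure_le_1_if_subset_unit_square simp: voronoi_cell_def)

lemma far_point_if_large_cell:
  assumes "0 < n" "\<forall>j<n. P j \<in> unit_square" "0 \<le> r" "4 * r\<^sup>2 < a"
    and "a \<le> largest_cell_area n P"
  shows "\<exists>x\<in>unit_square. \<forall>j<n. r \<le> dT x (P j)"
proof -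
  have "largest_cell_area n P \<in> (\<lambda>i. measure lborel (voronoi_cell n P i)) ` {..<n}"
    unfolding largest_cell_area_def using assms(1) by (intro Max_in) auto
  then obtain i where i: "i < n" and large: "a \<le> measure lborel (voronoi_cell n P i)"
    using assms(5) by auto
  have "\<exists>x\<in>voronoi_cell n P i. r \<le> dT x (P i)"
  proof (rule ccontr)
    assume "\<not> ?thesis"
    then have "\<forall>x\<in>voronoi_cell n P i. dT x (P i) < r" by (simp add: not_le)
    moreover have "voronoi_cell n P i \<subseteq> unit_square" unfolding voronoi_cell_def by auto
    ultimately have "measure lborel (voronoi_cell n P i) \<le> 4 * r\<^sup>2"
      using measure_le_if_dT_less assms(2,3) i by blast
    with assms(4) large show False by simp
  qed
  then obtain x where "x \<in> unit_square" "\<forall>j<n. dT x (P i) \<le> dT x (P j)" "r \<le> dT x (P i)"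
    unfolding voronoi_cell_def by blast
  then show ?thesis by (meson order.trans)
qed

lemma exists_grid_point_near:
  assumes "0 < n" "z \<in> {0..1}"
  shows "\<exists>k\<le>n. \<bar>real k / real n - z\<bar> < 1 / real n"
proof (intro exI conjI)
  let ?k = "nat \<lfloor>real n * z\<rfloor>"
  have floor: "real ?k \<le> real n * z" "real n * z < real ?k + 1" "real n * z \<le> real n"
    using assms by (auto simp: mult_le_cancel_left1)
  then show "?k \<le> n" by linarith
  have "\<bar>real ?k - real n * z\<bar> < 1" using floor by linarith
  then show "\<bar>real ?k / real n - z\<bar> < 1 / real n"
    using assms(1) by (simp add: field_simps abs_divide)
qed

definition grid_point :: "nat \<Rightarrow> nat \<times> nat \<Rightarrow> real \<times> real" where
  "grid_point n kl = (real (fst kl) / real n, real (snd kl) / real n)"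

definition grid_square :: "nat \<Rightarrow> real \<Rightarrow> nat \<times> nat \<Rightarrow> (real \<times> real) set" where
  "grid_square n u kl = torus_square (grid_point n kl) u"

lemma grid_point_in_unit_square: "kl \<in> {..n} \<times> {..n} \<Longrightarrow> grid_point n kl \<in> unit_square"
  by (auto simp: grid_point_def unit_square_def divide_le_eq_1)

lemma grid_square_borel [measurable]: "grid_square n u kl \<in> sets borel"
  unfolding grid_square_def by (rule torus_square_borel)

lemma empty_grid_square_if_far_point:
  assumes "0 < n" "x \<in> unit_square" "\<forall>j<n. sqrt 2 * (u + 1 / real n) \<le> dT x (P j)"
  shows "\<exists>kl\<in>{..n} \<times> {..n}. \<forall>j<n. P j \<notin> grid_square n u kl"
proof -
  have x: "fst x \<in> {0..1}" "snd x \<in> {0..1}"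
    using assms(2) by (auto simp: unit_square_def mem_Times_iff)
  obtain k l where kl: "(k, l) \<in> {..n} \<times> {..n}"
    and near: "\<bar>real k / real n - fst x\<bar> < 1 / real n" "\<bar>real l / real n - snd x\<bar> < 1 / real n"
    using exists_grid_point_near[OF assms(1) x(1)] exists_grid_point_near[OF assms(1) x(2)] by blast
  have g: "real k / real n \<in> {0..1}" "real l / real n \<in> {0..1}"
    using grid_point_in_unit_square[OF kl] by (auto simp: grid_point_def unit_square_def)
  have "P j \<notin> grid_square n u (k, l)" if "j < n" for j
  proof
    assume y: "P j \<in> grid_square n u (k, l)"
    then have "P j \<in> unit_square"
      using torus_square_subset_unit_square unfolding grid_square_def by blast
    moreover have "dT1 (fst (P j)) (fst x) < u + 1 / real n" "dT1 (snd (P j)) (snd x) < u + 1 / real n"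
      using y x g near dT1_le_abs[of "real k / real n" "fst x"] dT1_le_abs[of "real l / real n" "snd x"]
        dT1_triangle[of "fst (P j)" "real k / real n" "fst x"]
        dT1_triangle[of "snd (P j)" "real l / real n" "snd x"]
      by (auto simp: grid_square_def grid_point_def torus_square_def torus_interval_def)
    ultimately have "dT (P j) x < sqrt 2 * (u + 1 / real n)"
      using assms(2) by (intro dT_less_sqrt2_mult)
    with assms(3) that show False by (metis dT_commute not_le)
  qed
  with kl show ?thesis by blast
qed

lemma prob_space_uniform_unit_square: "prob_space (uniform_measure lborel unit_square)"
  by (rule prob_space_uniform_measure) (auto simp: emeasure_unit_square)

lemma finite_product_prob_space_random_points:
  "finite_product_prob_space (\<lambda>_. uniform_measure lborel unit_square) {..<n::nat}"
  using prob_space_uniform_unit_square prob_space_imp_sigma_finite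
  unfolding finite_product_prob_space_def finite_product_sigma_finite_def product_prob_space_def
    product_sigma_finite_def finite_product_sigma_finite_axioms_def product_prob_space_axioms_def
  by auto

lemma prob_space_random_points: "prob_space (random_points n)"
proof -
  interpret finite_product_prob_space "\<lambda>_. uniform_measure lborel unit_square" "{..<n}"
    by (rule finite_product_prob_space_random_points)
  show ?thesis unfolding random_points_def by unfold_locales
qed

lemma PiE_in_sets_random_points:
  "(\<And>i. i < n \<Longrightarrow> X i \<in> sets borel) \<Longrightarrow> PiE {..<n} X \<in> sets (random_points n)"
  unfolding random_points_def by (intro sets_PiM_I_finite) auto

lemma measure_random_points_PiE:
  assumes "\<And>i. i < n \<Longrightarrow> X i \<in> sets borel"
  shows "measure (random_points n) (PiE {..<n} X)
    = (\<Prod>i<n. measure lborel (unit_square \<inter> X i))"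
proof -
  interpret finite_product_prob_space "\<lambda>_. uniform_measure lborel unit_square" "{..<n}"
    by (rule finite_product_prob_space_random_points)
  have "measure (random_points n) (PiE {..<n} X)
      = (\<Prod>i<n. measure (uniform_measure lborel unit_square) (X i))"
    unfolding random_points_def using prob_times[of X] assms by simp
  then show ?thesis
    using assms by (simp add: emeasure_unit_square measure_unit_square)
qed

lemma measure_random_points_avoid:
  assumes "Q \<in> sets borel" "Q \<subseteq> unit_square"
  shows "measure (random_points n) (PiE {..<n} (\<lambda>_. - Q)) = (1 - measure lborel Q) ^ n"
proof -
  have "measure lborel (unit_square \<inter> - Q) = measure lborel unit_square - measure lborel Q"
    using assms by (simp add: Diff_eq[symmetric] measure_Diff emeasure_unit_square)
  then show ?thesis
    using assms by (simp add: measure_random_points_PiE measure_unit_square)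
qed

definition some_point_outside :: "nat \<Rightarrow> (nat \<Rightarrow> real \<times> real) set" where
  "some_point_outside n = (\<Union>j<n. PiE {..<n} (\<lambda>i. if i = j then - unit_square else UNIV))"

definition some_grid_square_empty :: "nat \<Rightarrow> real \<Rightarrow> (nat \<Rightarrow> real \<times> real) set" where
  "some_grid_square_empty n u = (\<Union>kl\<in>{..n} \<times> {..n}. PiE {..<n} (\<lambda>_. - grid_square n u kl))"

lemma some_point_outside_in_sets: "some_point_outside n \<in> sets (random_points n)"
  unfolding some_point_outside_def
  by (intro sets.countable_UN') (auto intro!: PiE_in_sets_random_points)

lemma some_grid_square_empty_in_sets: "some_grid_square_empty n u \<in> sets (random_points n)"
  unfolding some_grid_square_empty_def
  by (intro sets.countable_UN') (auto intro!: PiE_in_sets_random_points)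

lemma measure_some_point_outside: "measure (random_points n) (some_point_outside n) = 0"
proof -
  have "measure (random_points n) (some_point_outside n)
      \<le> (\<Sum>j<n. measure (random_points n) (PiE {..<n} (\<lambda>i. if i = j then - unit_square else UNIV)))"
    unfolding some_point_outside_def
    by (intro measure_UNION_le) (auto intro!: PiE_in_sets_random_points)
  also have "\<dots> = 0"
    by (intro sum.neutral ballI)
      (auto simp: measure_random_points_PiE intro!: prod_zero bexI[of _ "_ :: nat"])
  finally show ?thesis by (simp add: measure_nonneg antisym)
qed

lemma measure_some_grid_square_empty_le:
  assumes "0 \<le> u" "u \<le> 1/2"
  shows "measure (random_points n) (some_grid_square_empty n u) \<le> (real n + 1)\<^sup>2 * (1 - 4 * u\<^sup>2) ^ n"
proof -
  have empty: "measure (random_points n) (PiE {..<n} (\<lambda>_. - grid_square n u kl)) = (1 - 4 * u\<^sup>2) ^ n"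
    if "kl \<in> {..n} \<times> {..n}" for kl
    using grid_point_in_unit_square[OF that] assms torus_square_subset_unit_square
    by (simp add: measure_random_points_avoid grid_square_def measure_torus_square)
  have "measure (random_points n) (some_grid_square_empty n u)
      \<le> (\<Sum>kl\<in>{..n} \<times> {..n}. measure (random_points n) (PiE {..<n} (\<lambda>_. - grid_square n u kl)))"
    unfolding some_grid_square_empty_def
    by (intro measure_UNION_le) (auto intro!: PiE_in_sets_random_points)
  also have "\<dots> = (real n + 1)\<^sup>2 * (1 - 4 * u\<^sup>2) ^ n"
    by (simp add: empty power2_eq_square algebra_simps)
  finally show ?thesis .
qed

lemma large_cell_event_subset:
  assumes "0 < n" "0 \<le> u" "8 * (u + 1 / real n)\<^sup>2 < a"
  shows "{P \<in> space (random_points n). a \<le> largest_cell_area n P}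
    \<subseteq> some_point_outside n \<union> some_grid_square_empty n u"
proof safe
  fix P
  assume P: "P \<in> space (random_points n)" "a \<le> largest_cell_area n P"
    and not_empty: "P \<notin> some_grid_square_empty n u"
  then have ext: "P \<in> extensional {..<n}"
    unfolding random_points_def space_PiM by (auto simp: PiE_iff)
  show "P \<in> some_point_outside n"
  proof (cases "\<forall>j<n. P j \<in> unit_square")
    case True
    let ?r = "sqrt 2 * (u + 1 / real n)"
    have "0 \<le> ?r" "4 * ?r\<^sup>2 < a"
      using assms(2,3) by (simp_all add: power_mult_distrib)
    then obtain x where "x \<in> unit_square" "\<forall>j<n. ?r \<le> dT x (P j)"
      using far_point_if_large_cell[OF assms(1) True _ _ P(2)] by blast
    then obtain kl where "kl \<in> {..n} \<times> {..n}" "\<forall>j<n. P j \<notin> grid_square n u kl"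
      using empty_grid_square_if_far_point[OF assms(1)] by blast
    with ext not_empty show ?thesis
      unfolding some_grid_square_empty_def by (auto simp: PiE_iff)
  next
    case False
    with ext show ?thesis
      unfolding some_point_outside_def by (auto simp: PiE_iff)
  qed
qed

lemma mult_27_square_le_pow4:
  fixes x :: real
  assumes "7 \<le> x"
  shows "27 * (x + 1)\<^sup>2 \<le> x ^ 4"
proof -
  have "0 \<le> (x - 7) * (x + 1)"
    using assms by (intro mult_nonneg_nonneg) auto
  then have "6 * (x + 1) \<le> x\<^sup>2"
    by (simp add: algebra_simps power2_eq_square)
  have "27 * (x + 1)\<^sup>2 \<le> 36 * (x + 1)\<^sup>2"
    by simp
  also have "\<dots> = (6 * (x + 1))\<^sup>2"
    by (simp only: power_mult_distrib) simp
  also have "\<dots> \<le> (x\<^sup>2)\<^sup>2"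
    using \<open>6 * (x + 1) \<le> x\<^sup>2\<close> assms by (intro power_mono) auto
  finally show ?thesis by simp
qed

lemma exp_3_le_27: "exp (3::real) \<le> 27"
proof -
  have "exp (3::real) = exp 1 ^ 3"
    using exp_of_nat_mult[of 3 1] by simp
  also have "\<dots> \<le> 3 ^ 3"
    using exp_le by (intro power_mono) auto
  finally show ?thesis by simp
qed

text \<open>
  The loss \<open>n (4 s\<^sup>2 - 4 u\<^sup>2) \<le> 8 s (1 + 1/n\<^sup>2) \<le> 3\<close> in the exponent costs the
  factor \<open>e\<^sup>3 \<le> 27\<close>.
\<close>
lemma grid_union_bound_le:
  fixes n :: nat and s u :: real
  assumes n: "n \<ge> 7" and s: "s\<^sup>2 \<le> 1/8" and u: "u = s - (1 / real n + 1 / real n ^ 3)" "0 \<le> u"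
  shows "(real n + 1)\<^sup>2 * (1 - 4 * u\<^sup>2) ^ n \<le> real n ^ 4 * exp (- 4 * s\<^sup>2 * real n)"
proof -
  define d where "d = 1 / real n + 1 / real n ^ 3"
  have "0 < d" using n unfolding d_def by (intro add_pos_pos) auto
  have s_eq: "s = u + d" using u(1) unfolding d_def by simp
  then have "0 \<le> s" using u(2) \<open>0 < d\<close> by linarith
  have "u\<^sup>2 \<le> s\<^sup>2" using s_eq u(2) \<open>0 < d\<close> by (intro power_mono) auto
  then have q1: "4 * u\<^sup>2 \<le> 1" using s by linarith
  have "1 / (real n)\<^sup>2 \<le> 1 / 49"
    using n power_mono[of 7 "real n" 2] by (simp add: divide_simps)
  then have "(1 + 1 / (real n)\<^sup>2)\<^sup>2 \<le> (1 + 1 / 49)\<^sup>2"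
    by (intro power_mono) auto
  then have "(8 * s * (1 + 1 / (real n)\<^sup>2))\<^sup>2 \<le> 64 * (1 / 8) * (1 + 1 / 49)\<^sup>2"
    using s unfolding power_mult_distrib by (intro mult_mono) auto
  also have "\<dots> \<le> 3\<^sup>2" by (simp add: power2_eq_square)
  finally have small: "8 * s * (1 + 1 / (real n)\<^sup>2) \<le> 3"
    by (rule power2_le_imp_le) simp
  have "real n * (4 * s\<^sup>2 - 4 * u\<^sup>2) = real n * (8 * s * d - 4 * d\<^sup>2)"
    using s_eq by (simp add: power2_eq_square algebra_simps)
  also have "\<dots> \<le> real n * (8 * s * d)"
    by (intro mult_left_mono) auto
  also have "\<dots> = 8 * s * (1 + 1 / (real n)\<^sup>2)"
    using n unfolding d_def by (simp add: field_simps power2_eq_square power3_eq_cube)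
  finally have loss: "real n * (4 * s\<^sup>2 - 4 * u\<^sup>2) \<le> 3"
    using small by linarith
  have "(1 - 4 * u\<^sup>2) ^ n \<le> exp (- (4 * u\<^sup>2 * real n))"
    using exp_ge_one_minus_x_over_n_power_n[of "4 * u\<^sup>2 * real n" n] n q1 by simp
  also have "\<dots> = exp (- 4 * s\<^sup>2 * real n) * exp (real n * (4 * s\<^sup>2 - 4 * u\<^sup>2))"
    by (simp add: exp_add[symmetric] algebra_simps)
  also have "\<dots> \<le> exp (- 4 * s\<^sup>2 * real n) * 27"
    using loss exp_3_le_27 by (intro mult_left_mono) (auto intro: order.trans)
  finally have "(real n + 1)\<^sup>2 * (1 - 4 * u\<^sup>2) ^ n \<le> 27 * (real n + 1)\<^sup>2 * exp (- 4 * s\<^sup>2 * real n)"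
    by (simp add: mult_left_mono mult_ac)
  also have "\<dots> \<le> real n ^ 4 * exp (- 4 * s\<^sup>2 * real n)"
    using n mult_27_square_le_pow4[of "real n"] by (intro mult_right_mono) auto
  finally show ?thesis .
qed

text \<open>
  The margin \<open>1/n\<close> absorbs the rounding to the grid; the extra \<open>1/n\<^sup>3\<close> only makes the
  last inequality strict.
\<close>
lemma grid_half_width_bounds:
  assumes n: "n \<ge> 7" and a: "a \<le> 1" "32 \<le> a * (real n)\<^sup>2"
    and s: "s = sqrt (a / 8)" and u: "u = s - (1 / real n + 1 / real n ^ 3)"
  shows "0 \<le> u" "u \<le> 1 / 2" "8 * (u + 1 / real n)\<^sup>2 < a"
proof -
  have "0 < a * (real n)\<^sup>2" using a(2) by linarith
  then have "0 \<le> a" by (simp add: zero_less_mult_iff)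
  then have s2: "s\<^sup>2 = a / 8" unfolding s by simp
  have "1 / real n ^ 3 \<le> 1 / real n"
    using n by (intro divide_left_mono) (auto simp: power3_eq_cube less_1_mult order.strict_implies_order)
  moreover have "0 < (real n)\<^sup>2" using n by simp
  then have "(2 / real n)\<^sup>2 \<le> a / 8"
    using a(2) by (simp add: power_divide field_simps)
  then have "2 / real n \<le> s"
    unfolding s by (rule real_le_rsqrt)
  ultimately show "0 \<le> u" unfolding u by simp
  have "u + 1 / real n < s" "0 < 1 / real n ^ 3"
    using n unfolding u by auto
  then show "8 * (u + 1 / real n)\<^sup>2 < a"
    using \<open>0 \<le> u\<close> s2 power_strict_mono[of "u + 1 / real n" s 2] by simp
  have "s\<^sup>2 \<le> (1 / 2)\<^sup>2"
    unfolding s2 using a(1) by (simp add: power2_eq_square)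
  then have "s \<le> 1 / 2"
    by (rule power2_le_imp_le) simp
  moreover have "0 \<le> 1 / real n" by simp
  ultimately show "u \<le> 1 / 2"
    using \<open>u + 1 / real n < s\<close> by linarith
qed

lemma large_cell_tail_bound:
  assumes n: "n \<ge> 7" and a: "a \<le> 1" "32 \<le> a * (real n)\<^sup>2"
  shows "\<exists>E\<in>sets (random_points n).
           {P \<in> space (random_points n). a \<le> largest_cell_area n P} \<subseteq> E
         \<and> measure (random_points n) E \<le> real n ^ 4 * exp (- a * real n / 2)"
proof -
  define s where "s = sqrt (a / 8)"
  define u where "u = s - (1 / real n + 1 / real n ^ 3)"
  note u_bounds = grid_half_width_bounds[OF n a s_def u_def]
  let ?E = "some_point_outside n \<union> some_grid_square_empty n u"
  have "measure (random_points n) ?E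
      \<le> measure (random_points n) (some_point_outside n)
        + measure (random_points n) (some_grid_square_empty n u)"
    by (intro measure_Un_le some_point_outside_in_sets some_grid_square_empty_in_sets)
  also have "\<dots> \<le> (real n + 1)\<^sup>2 * (1 - 4 * u\<^sup>2) ^ n"
    using measure_some_grid_square_empty_le[OF u_bounds(1,2)]
    by (simp add: measure_some_point_outside)
  also have "\<dots> \<le> real n ^ 4 * exp (- a * real n / 2)"
  proof -
    have "0 \<le> a"
      using u_bounds(3) zero_le_power2[of "u + 1 / real n"] by linarith
    then have s2: "s\<^sup>2 = a / 8"
      unfolding s_def by simp
    then have "s\<^sup>2 \<le> 1 / 8" using a(1) by simp
    moreover have "- 4 * s\<^sup>2 * real n = - a * real n / 2"
      unfolding s2 by simp
    ultimately show ?thesis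
      using grid_union_bound_le[OF n _ u_def u_bounds(1)] by metis
  qed
  finally show ?thesis
    using large_cell_event_subset[OF _ u_bounds(1,3)] n
      some_point_outside_in_sets some_grid_square_empty_in_sets
    by (intro bexI[of _ ?E]) auto
qed

lemma large_cell_event_empty:
  assumes "0 < n" "1 < a"
  shows "{P \<in> space (random_points n). a \<le> largest_cell_area n P} = {}"
proof -
  have "largest_cell_area n P < a" for P
    using largest_cell_area_le_1[OF assms(1)] assms(2) by (rule le_less_trans)
  then show ?thesis by (auto dest: leD)
qed

lemma threshold_le_1_bounds:
  fixes n :: nat
  assumes n: "2 \<le> n" and c: "2 < c" and a: "4 * c * ln (real n) / real n \<le> 1"
  shows "7 \<le> n" "32 \<le> 4 * c * ln (real n) / real n * (real n)\<^sup>2"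
proof -
  have "0 < ln (real n)" using n by simp
  with c have "8 * ln (real n) < 4 * c * ln (real n)" by simp
  also have "\<dots> \<le> real n" using a n by (simp add: field_simps)
  finally have "8 * ln (real n) < real n" .
  moreover have "1 - 1 / real n \<le> ln (real n)"
    using ln_le_minus_one[of "1 / real n"] n by (simp add: ln_div)
  ultimately show "7 \<le> n"
    using n by (cases "n \<in> {2, 3, 4, 5, 6}") auto
  then have "1 \<le> ln (real n)"
    using exp_le ln_ge_iff[of "real n" 1] by simp
  then have "4 * 2 * 1 * 7 \<le> 4 * c * ln (real n) * real n"
    using c \<open>7 \<le> n\<close> by (intro mult_mono) auto
  moreover have "4 * c * ln (real n) / real n * (real n)\<^sup>2 = 4 * c * ln (real n) * real n"
    using n by (simp add: power2_eq_square)
  ultimately show "32 \<le> 4 * c * ln (real n) / real n * (real n)\<^sup>2" by simp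
qed

lemma pow4_mult_exp_threshold:
  assumes "0 < n"
  shows "real n ^ 4 * exp (- (4 * c * ln (real n) / real n) * real n / 2)
    = 1 / real n powr (2 * c - 4)"
proof -
  have "exp (- (4 * c * ln (real n) / real n) * real n / 2) = real n powr (- (2 * c))"
    using assms by (simp add: powr_def)
  moreover have "real n ^ 4 = real n powr 4"
    using assms by (simp add: powr_realpow)
  ultimately have "real n ^ 4 * exp (- (4 * c * ln (real n) / real n) * real n / 2)
      = real n powr (4 + - (2 * c))"
    by (simp only: powr_add)
  also have "\<dots> = real n powr (- (2 * c - 4))" by simp
  finally show ?thesis by (simp only: powr_minus_divide)
qed

theorem lemma3p1:
  fixes n :: nat and c :: real
  assumes "n \<ge> 1" and "c > 1"
  shows "\<exists>E \<in> sets (random_points n).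
           {P \<in> space (random_points n). largest_cell_area n P \<ge> 4 * c * ln (real n) / real n} \<subseteq> E
         \<and> measure (random_points n) E \<le> 1 / real n powr (2 * c - 4)"
proof (cases "real n powr (2 * c - 4) \<le> 1")
  case True
  then show ?thesis
    using assms prob_space.prob_space[OF prob_space_random_points]
    by (intro bexI[of _ "space (random_points n)"]) (auto simp: divide_simps)
next
  case False
  then have "n \<noteq> 1" "\<not> c \<le> 2"
    using assms powr_mono[of "2 * c - 4" 0 "real n"] by auto
  with assms have n: "n \<ge> 2" and c: "c > 2" by auto
  show ?thesis
  proof (cases "4 * c * ln (real n) / real n \<le> 1")
    case False
    with n show ?thesis
      using large_cell_event_empty[of n "4 * c * ln (real n) / real n"]
      by (intro bexI[of _ "{}"]) auto
  next
    case True
    have "0 < n" using n by simp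
    from large_cell_tail_bound[OF threshold_le_1_bounds(1)[OF n c True] True
        threshold_le_1_bounds(2)[OF n c True]]
    show ?thesis unfolding pow4_mult_exp_threshold[OF \<open>0 < n\<close>] .
  qed
qed

end
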